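(* Let $C$ be a field of characteristic zero, $L\in C[x][\partial]$ of order $r_L$, and $P\in C[x,y]$ with $\deg_yP=r_P$, square-free in $C(x)[y]$ and without non-constant divisors in $\bar C[y]$. Let $f_1,\dots,f_{r_L}$ be $C$-linearly independent solutions of $L$, $g_1,\dots,g_{r_P}$ distinct solutions of $P$, $V$ the $C$-span of all $f_i\circ g_j$, and $r=\dim_CV$. Let $A(x,y)\in C[x,y]^{(r+1)\times r_L}$ be a matrix such that $f\in V$ if and only if $(f,f',\dots,f^{(r)})^T$ lies in the column space of $\begin{pmatrix}A(x,g_1)&\cdots&A(x,g_{r_P})\end{pmatrix}$. Then there exists a matrix $B(y)\in C[y]^{(r_Lr_P-r)\times r_L}$ whose entries have degree at most $r_P-1$ such that the $(r_Lr_P+1)\times r_Lr_P$ matrix \[ \begin{pmatrix}A(x,g_1)&\cdots&A(x,g_{r_P})\\ B(g_1)&\cdots&B(g_{r_P})\end{pmatrix} \] has rank $r_Lr_P$.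
   Context: All functions $g_j$, $f_i\circ g_j$ and $f$ are regarded as elements of a common differential field $K\supseteq C(x)$ (derivation extending $d/dx$) whose field of constants is $C$; e.g. for $C=\mathbb C$, meromorphic functions on a connected open set where they are all analytic. Column spaces and ranks are taken over $K$. A solution $g$ of $P$ satisfies $P(x,g(x))=0$; a solution $f$ of $L$ satisfies $L(f)=0$. *)

theory Defs
  imports "HOL-Computational_Algebra.Polynomial" "HOL-Computational_Algebra.Fraction_Field"
    "HOL-Computational_Algebra.Squarefree" "HOL-Algebra.Algebraic_Closure_Type"
    "Jordan_Normal_Form.DL_Rank"
begin

text \<open>C is embedded in the differential field K via the ring embedding emb.
  A family v_0,...,v_(n-1) of elements of K is C-linearly independent.\<close>
definition c_lin_indep :: "('c::field \<Rightarrow> 'a::field) \<Rightarrow> (nat \<Rightarrow> 'a) \<Rightarrow> nat \<Rightarrow> bool" where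
  "c_lin_indep emb v n \<longleftrightarrow>
     (\<forall>c::nat \<Rightarrow> 'c. (\<Sum>i<n. emb (c i) * v i) = 0 \<longrightarrow> (\<forall>i<n. c i = 0))"

definition c_span :: "('c::field \<Rightarrow> 'a::field) \<Rightarrow> (nat \<Rightarrow> 'a) \<Rightarrow> nat \<Rightarrow> 'a set" where
  "c_span emb v n = {(\<Sum>i<n. emb (c i) * v i) | c :: nat \<Rightarrow> 'c. True}"

definition eval_x :: "('c::field \<Rightarrow> 'a::field) \<Rightarrow> 'a \<Rightarrow> 'c poly \<Rightarrow> 'a" where
  "eval_x emb xx p = poly (map_poly emb p) xx"

text \<open>Elements of C[x,y] are represented as 'c poly poly = (C[x])[y], the outer variable being y.
  Evaluate P(x, y) at x := xx, y := yy.\<close>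
definition eval_xy :: "('c::field \<Rightarrow> 'a::field) \<Rightarrow> 'a \<Rightarrow> 'c poly poly \<Rightarrow> 'a \<Rightarrow> 'a" where
  "eval_xy emb xx p yy = poly (map_poly (eval_x emb xx) p) yy"

definition eval_y :: "('c::field \<Rightarrow> 'a::field) \<Rightarrow> 'c poly \<Rightarrow> 'a \<Rightarrow> 'a" where
  "eval_y emb b yy = poly (map_poly emb b) yy"

end

theory Submission
  imports Defs
begin

text \<open>Let \<open>b\<^sub>1, \<dots>, b\<^sub>r\<close> be a \<open>C\<close>-basis of \<open>V\<close>. By the choice of \<open>A\<close>, each vector
  \<open>(b\<^sub>k, b\<^sub>k', \<dots>, b\<^sub>k\<^sup>(\<^sup>r\<^sup>))\<close> is \<open>A\<^sub>g x\<^sub>k\<close> for some \<open>x\<^sub>k\<close>, where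
  \<open>A\<^sub>g = (A(x,g\<^sub>1) \<dots> A(x,g\<^sub>r\<^sub>P))\<close>, and the Wronskian criterion makes these images
  \<open>K\<close>-linearly independent. Hence \<open>A\<^sub>g\<close> has rank at least \<open>r\<close> and its kernel has dimension at
  most \<open>r\<^sub>L r\<^sub>P - r\<close>. Since the \<open>g\<^sub>j\<close> are distinct, the rows \<open>(B(g\<^sub>1) \<dots> B(g\<^sub>r\<^sub>P))\<close>
  obtained from the monomial row vectors \<open>B(y) = y\<^sup>d e\<^sub>k\<close> (\<open>d < r\<^sub>P\<close>, \<open>k < r\<^sub>L\<close>) form an
  invertible block Vandermonde matrix, so no nonzero vector is annihilated by all of them. Choosing
  them greedily, each new row lowers the dimension of the remaining kernel, and at most
  \<open>r\<^sub>L r\<^sub>P - r\<close> of them reduce it to zero; stacked under \<open>A\<^sub>g\<close> they give full column rank.\<close>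

no_notation fps_nth (infixl \<open>$\<close> 75)
  \<comment> \<open>\<open>$\<close> is used below only for vector indexing\<close>

text \<open>Vectors of \<open>K\<^sup>n\<close> are represented by coordinate functions, of which only the
  coordinates below \<open>n\<close> matter.\<close>
definition lin_indep_vecs :: "nat \<Rightarrow> 'i set \<Rightarrow> ('i \<Rightarrow> nat \<Rightarrow> 'a::field) \<Rightarrow> bool" where
  "lin_indep_vecs n I v \<longleftrightarrow> (\<forall>\<alpha>. (\<forall>c<n. (\<Sum>i\<in>I. \<alpha> i * v i c) = 0) \<longrightarrow> (\<forall>i\<in>I. \<alpha> i = 0))"

lemma lin_indep_vecs_empty [simp]: "lin_indep_vecs n {} v"
  by (simp add: lin_indep_vecs_def)

lemma lin_indep_vecs_cong:
  assumes "\<And>i c. i \<in> I \<Longrightarrow> c < n \<Longrightarrow> v i c = w i c"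
  shows "lin_indep_vecs n I v \<longleftrightarrow> lin_indep_vecs n I w"
  unfolding lin_indep_vecs_def using assms by (simp cong: sum.cong)

lemma lin_indep_vecs_inj_on:
  fixes v :: "'i \<Rightarrow> nat \<Rightarrow> 'a::field"
  assumes "finite I" "lin_indep_vecs n I v"
  shows "inj_on (\<lambda>i. vec n (v i)) I"
proof (rule inj_onI, rule ccontr)
  fix i j assume ij: "i \<in> I" "j \<in> I" "vec n (v i) = vec n (v j)" "i \<noteq> j"
  define \<alpha> where "\<alpha> k = (if k = i then 1 else if k = j then -1 else 0 :: 'a)" for k
  have "(\<Sum>k\<in>I. \<alpha> k * v k c) = 0" if "c < n" for c
  proof -
    have "v i c = v j c" using arg_cong[OF ij(3), of "\<lambda>u. u $ c"] that by simp
    moreover have "(\<Sum>k\<in>I. \<alpha> k * v k c) = (\<Sum>k\<in>I. (if k = i then v k c else 0) - (if k = j then v k c else 0))"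
      using ij(4) by (intro sum.cong) (auto simp: \<alpha>_def)
    ultimately show ?thesis using ij assms(1) by (simp add: sum_subtractf)
  qed
  then have "\<alpha> i = 0" using assms(2) ij(1) unfolding lin_indep_vecs_def by blast
  then show False by (simp add: \<alpha>_def)
qed

lemma lin_indep_vecs_card_le:
  fixes v :: "'i \<Rightarrow> nat \<Rightarrow> 'a::field"
  assumes "finite I" and indep: "lin_indep_vecs n I v"
  shows "card I \<le> n"
proof -
  interpret vs: vec_space "TYPE('a)" n .
  let ?w = "\<lambda>i. vec n (v i)"
  have inj: "inj_on ?w I" using assms by (rule lin_indep_vecs_inj_on)
  have carrier: "?w ` I \<subseteq> carrier_vec n" by auto
  have "vs.lin_indpt (?w ` I)"
  proof
    assume dep: "vs.lin_dep (?w ` I)"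
    obtain a u where a: "vs.lincomb a (?w ` I) = 0\<^sub>v n" "u \<in> ?w ` I" "a u \<noteq> 0"
      using vs.finite_lin_dep[OF finite_imageI[OF assms(1)] dep carrier] by auto
    have "(\<Sum>i\<in>I. a (?w i) * v i c) = 0" if "c < n" for c
    proof -
      have "(\<Sum>i\<in>I. a (?w i) * v i c) = (\<Sum>x\<in>?w ` I. a x * x $ c)"
        using that by (simp add: sum.reindex[OF inj])
      also have "\<dots> = vs.lincomb a (?w ` I) $ c"
        using that by (intro vs.lincomb_index[symmetric]) auto
      finally show ?thesis using a(1) that by simp
    qed
    then have "\<forall>i\<in>I. a (?w i) = 0"
      using indep unfolding lin_indep_vecs_def by (elim allE[of _ "\<lambda>i. a (?w i)"]) blast
    then show False using a(2,3) by blast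
  qed
  then have "card (?w ` I) \<le> n"
    using vs.li_le_dim(2)[OF vs.fin_dim carrier] vs.dim_is_n by simp
  then show ?thesis using card_image[OF inj] by simp
qed

lemma functional_of_lincomb:
  fixes a :: "'c \<Rightarrow> 'a::comm_semiring_0"
  shows "(\<Sum>c\<in>C. a c * (\<Sum>k\<in>K. \<gamma> k * x k c)) = (\<Sum>k\<in>K. \<gamma> k * (\<Sum>c\<in>C. a c * x k c))"
  by (simp add: sum_distrib_left mult.left_commute sum.swap[of _ C])

lemma lin_indep_vecs_insert:
  fixes v :: "'i \<Rightarrow> nat \<Rightarrow> 'a::field"
  assumes "finite I" "k \<notin> I" and indep: "lin_indep_vecs n I v"
    and annihilates: "\<forall>i\<in>I. (\<Sum>c<n. e c * v i c) = 0" and "(\<Sum>c<n. e c * u c) \<noteq> 0"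
  shows "lin_indep_vecs n (insert k I) (v(k := u))"
  unfolding lin_indep_vecs_def
proof (intro allI impI)
  fix \<beta> assume rel: "\<forall>c<n. (\<Sum>i\<in>insert k I. \<beta> i * (v(k := u)) i c) = 0"
  have on_I: "(v(k := u)) i = v i" if "i \<in> I" for i using that assms(2) by auto
  have "0 = (\<Sum>c<n. e c * (\<Sum>i\<in>insert k I. \<beta> i * (v(k := u)) i c))"
    using rel by simp
  also have "\<dots> = (\<Sum>i\<in>insert k I. \<beta> i * (\<Sum>c<n. e c * (v(k := u)) i c))"
    by (rule functional_of_lincomb)
  also have "\<dots> = \<beta> k * (\<Sum>c<n. e c * u c)"
    using assms(1,2) annihilates by (simp add: on_I fun_upd_same del: fun_upd_apply cong: sum.cong)
  finally have "\<beta> k = 0" using assms(5) by simp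
  with rel have "\<forall>c<n. (\<Sum>i\<in>I. \<beta> i * v i c) = 0"
    using assms(1,2) by (simp add: on_I fun_upd_same del: fun_upd_apply cong: sum.cong)
  then have "\<forall>i\<in>I. \<beta> i = 0"
    using indep unfolding lin_indep_vecs_def by blast
  with \<open>\<beta> k = 0\<close> show "\<forall>i\<in>insert k I. \<beta> i = 0" by simp
qed

lemma select_separating_functionals:
  fixes E :: "'e \<Rightarrow> nat \<Rightarrow> 'a::field" and Z :: "(nat \<Rightarrow> 'a) \<Rightarrow> bool"
  assumes separating: "\<And>u. \<exists>c<n. u c \<noteq> 0 \<Longrightarrow> \<exists>e. Q e \<and> (\<Sum>c<n. E e c * u c) \<noteq> 0"
    and bounded: "\<And>(I :: nat set) v. finite I \<Longrightarrow> \<forall>i\<in>I. Z (v i) \<Longrightarrow> lin_indep_vecs n I v \<Longrightarrow> card I \<le> m"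
  shows "\<exists>S. length S \<le> m \<and> set S \<subseteq> Collect Q \<and>
           (\<forall>u. Z u \<and> (\<forall>e\<in>set S. (\<Sum>c<n. E e c * u c) = 0) \<longrightarrow> (\<forall>c<n. u c = 0))"
  using bounded
proof (induction m arbitrary: Z)
  case (0 Z)
  have "\<forall>c<n. u c = 0" if "Z u" for u
  proof (rule ccontr)
    assume "\<not> (\<forall>c<n. u c = 0)"
    then obtain e where "(\<Sum>c<n. E e c * u c) \<noteq> 0" using separating by blast
    then have indep: "lin_indep_vecs n {0::nat} ((\<lambda>_. u)(0 := u))"
      by (intro lin_indep_vecs_insert) auto
    show False using "0.prems"[OF _ _ indep] \<open>Z u\<close> by simp
  qed
  then show ?case by (intro exI[of _ "[]"]) auto
next
  case (Suc m Z)
  show ?case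
  proof (cases "\<exists>u. Z u \<and> (\<exists>c<n. u c \<noteq> 0)")
    case False
    then show ?thesis by (intro exI[of _ "[]"]) auto
  next
    case True
    then obtain u where u: "Z u" "\<exists>c<n. u c \<noteq> 0" by blast
    obtain e where e: "Q e" "(\<Sum>c<n. E e c * u c) \<noteq> 0" using separating u(2) by blast
    define Z' where "Z' w \<longleftrightarrow> Z w \<and> (\<Sum>c<n. E e c * w c) = 0" for w
    have bound: "card I \<le> m" if I: "finite I" "\<forall>i\<in>I. Z' (v i)" "lin_indep_vecs n I v" for I :: "nat set" and v
    proof -
      obtain k where "k \<notin> I" using I(1) ex_new_if_finite infinite_UNIV_nat by blast
      with I have "lin_indep_vecs n (insert k I) (v(k := u))"
        using e(2) by (intro lin_indep_vecs_insert) (auto simp: Z'_def)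
      moreover have "\<forall>i\<in>insert k I. Z ((v(k := u)) i)" using I(2) u(1) by (auto simp: Z'_def)
      ultimately have "card (insert k I) \<le> Suc m" using Suc.prems I(1) by blast
      then show ?thesis using \<open>k \<notin> I\<close> I(1) by simp
    qed
    have "\<exists>S. length S \<le> m \<and> set S \<subseteq> Collect Q \<and>
           (\<forall>w. Z' w \<and> (\<forall>e\<in>set S. (\<Sum>c<n. E e c * w c) = 0) \<longrightarrow> (\<forall>c<n. w c = 0))"
      by (rule Suc.IH) (rule bound)
    then obtain S where S: "length S \<le> m" "set S \<subseteq> Collect Q"
      "\<forall>w. Z' w \<and> (\<forall>e\<in>set S. (\<Sum>c<n. E e c * w c) = 0) \<longrightarrow> (\<forall>c<n. w c = 0)"
      by (elim exE conjE)
    show ?thesis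
    proof (intro exI[of _ "e # S"] conjI allI impI)
      show "length (e # S) \<le> Suc m" using S(1) by simp
      show "set (e # S) \<subseteq> Collect Q" using S(2) e(1) by simp
      fix w c assume w: "Z w \<and> (\<forall>e'\<in>set (e # S). (\<Sum>c<n. E e' c * w c) = 0)" and "c < n"
      then have "Z' w" "\<forall>e'\<in>set S. (\<Sum>c<n. E e' c * w c) = 0" by (simp_all add: Z'_def)
      then show "w c = 0" using S(3) \<open>c < n\<close> by blast
    qed
  qed
qed

lemma lin_indep_kernel_card_le:
  fixes a x :: "nat \<Rightarrow> nat \<Rightarrow> 'a::field" and v :: "'i \<Rightarrow> nat \<Rightarrow> 'a"
  assumes images_indep: "lin_indep_vecs r {..<r} (\<lambda>k i. \<Sum>c<n. a i c * x k c)"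
    and "finite I" and kernel: "\<forall>i\<in>I. \<forall>j<r. (\<Sum>c<n. a j c * v i c) = 0"
    and indep: "lin_indep_vecs n I v"
  shows "r + card I \<le> n"
proof -
  have "lin_indep_vecs n ({..<r} <+> I) (case_sum x v)"
    unfolding lin_indep_vecs_def
  proof (intro allI impI)
    fix \<gamma> assume "\<forall>c<n. (\<Sum>s\<in>{..<r} <+> I. \<gamma> s * case_sum x v s c) = 0"
    then have rel: "\<forall>c<n. (\<Sum>k<r. \<gamma> (Inl k) * x k c) + (\<Sum>i\<in>I. \<gamma> (Inr i) * v i c) = 0"
      using \<open>finite I\<close> by (simp add: sum.Plus)
    have "(\<Sum>k<r. \<gamma> (Inl k) * (\<Sum>c<n. a j c * x k c)) = 0" if "j < r" for j
    proof -
      have "0 = (\<Sum>c<n. a j c * ((\<Sum>k<r. \<gamma> (Inl k) * x k c) + (\<Sum>i\<in>I. \<gamma> (Inr i) * v i c)))"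
        using rel by simp
      also have "\<dots> = (\<Sum>k<r. \<gamma> (Inl k) * (\<Sum>c<n. a j c * x k c))
          + (\<Sum>i\<in>I. \<gamma> (Inr i) * (\<Sum>c<n. a j c * v i c))"
        by (simp add: distrib_left sum.distrib functional_of_lincomb[of "a j"])
      finally show ?thesis using kernel that by simp
    qed
    then have Inl: "\<forall>k<r. \<gamma> (Inl k) = 0"
      using images_indep[unfolded lin_indep_vecs_def, rule_format, of "\<lambda>k. \<gamma> (Inl k)"] by blast
    then have "\<forall>c<n. (\<Sum>i\<in>I. \<gamma> (Inr i) * v i c) = 0" using rel by simp
    then have "\<forall>i\<in>I. \<gamma> (Inr i) = 0"
      using indep[unfolded lin_indep_vecs_def, rule_format, of "\<lambda>i. \<gamma> (Inr i)"] by blast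
    with Inl show "\<forall>s\<in>{..<r} <+> I. \<gamma> s = 0" by auto
  qed
  then have "card ({..<r} <+> I) \<le> n"
    using \<open>finite I\<close> by (intro lin_indep_vecs_card_le) auto
  then show ?thesis using \<open>finite I\<close> by (simp add: card_Plus)
qed


lemma rank_mat_eq_dim_col:
  fixes m :: "nat \<Rightarrow> nat \<Rightarrow> 'a::field"
  assumes indep: "lin_indep_vecs nr {..<nc} (\<lambda>c i. m i c)"
  shows "vec_space.rank nr (mat nr nc (\<lambda>(i, c). m i c)) = nc"
proof -
  interpret vs: vec_space "TYPE('a)" nr .
  define M where "M = mat nr nc (\<lambda>(i, c). m i c)"
  have M: "M \<in> carrier_mat nr nc" by (simp add: M_def)
  have cols: "cols M = map (\<lambda>c. vec nr (\<lambda>i. m i c)) [0..<nc]"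
    by (auto simp: M_def cols_def intro!: eq_vecI)
  have distinct: "distinct (cols M)"
    using lin_indep_vecs_inj_on[OF _ indep] by (simp add: cols distinct_map atLeast0LessThan)
  moreover have "vs.lin_indpt (set (cols M))"
  proof
    assume "vs.lin_dep (set (cols M))"
    then obtain w where w: "w \<in> carrier_vec nc" "w \<noteq> 0\<^sub>v nc" "M *\<^sub>v w = 0\<^sub>v nr"
      using vs.lin_depE[OF M _ distinct] by blast
    have "(\<Sum>c<nc. m i c * w $ c) = 0" if "i < nr" for i
      using w(1) arg_cong[OF w(3), of "\<lambda>u. u $ i"] that
      by (simp add: M_def scalar_prod_def atLeast0LessThan)
    then have "\<forall>i<nr. (\<Sum>c<nc. w $ c * m i c) = 0" by (simp add: mult.commute)
    then have "\<forall>c<nc. w $ c = 0"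
      using indep[unfolded lin_indep_vecs_def, rule_format, of "\<lambda>c. w $ c"] by blast
    then have "w = 0\<^sub>v nc" using w(1) by (intro eq_vecI) auto
    then show False using w(2) by contradiction
  qed
  ultimately show ?thesis using vs.lin_indpt_full_rank[OF M] unfolding M_def by blast
qed

lemma column_space_coordinates:
  fixes a :: "nat \<Rightarrow> nat \<Rightarrow> 'a::field"
  assumes "vec nr h \<in> {mat nr nc (\<lambda>(i, c). a i c) *\<^sub>v w | w. w \<in> carrier_vec nc}"
  shows "\<exists>x. \<forall>i<nr. h i = (\<Sum>c<nc. a i c * x c)"
proof -
  obtain w where w: "w \<in> carrier_vec nc" "vec nr h = mat nr nc (\<lambda>(i, c). a i c) *\<^sub>v w"
    using assms by blast
  have "h i = (\<Sum>c<nc. a i c * w $ c)" if "i < nr" for i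
    using arg_cong[OF w(2), of "\<lambda>u. u $ i"] w(1) that by (simp add: scalar_prod_def atLeast0LessThan)
  then show ?thesis by blast
qed

lemma vandermonde_separates:
  fixes g z :: "nat \<Rightarrow> 'a::field"
  assumes inj: "inj_on g {..<m}" and "j0 < m" "z j0 \<noteq> 0"
  shows "\<exists>d<m. (\<Sum>j<m. g j ^ d * z j) \<noteq> 0"
proof (rule ccontr)
  assume "\<not> ?thesis"
  then have moments: "\<And>d. d < m \<Longrightarrow> (\<Sum>j<m. g j ^ d * z j) = 0" by auto
  define p where "p = (\<Prod>j\<in>{..<m} - {j0}. [:- g j, 1:])"
  have "degree p \<le> (\<Sum>j\<in>{..<m} - {j0}. degree [:- g j, 1:])"
    unfolding p_def using degree_prod_sum_le[of _ "\<lambda>j. [:- g j, 1:]"] by (simp add: o_def)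
  also have "\<dots> = m - 1" using \<open>j0 < m\<close> by simp
  finally have "degree p < m" using \<open>j0 < m\<close> by linarith
  have "(\<Sum>j<m. poly p (g j) * z j) = (\<Sum>d\<le>degree p. coeff p d * (\<Sum>j<m. g j ^ d * z j))"
    by (simp add: poly_altdef sum_distrib_right sum_distrib_left mult.assoc sum.swap[of _ "{..<m}"])
  also have "\<dots> = 0" using moments \<open>degree p < m\<close> by simp
  also have "(\<Sum>j<m. poly p (g j) * z j) = poly p (g j0) * z j0"
    using \<open>j0 < m\<close> by (subst sum.remove[of _ j0]) (auto simp: p_def poly_prod intro!: sum.neutral)
  finally have "poly p (g j0) = 0" using \<open>z j0 \<noteq> 0\<close> by simp
  moreover have "poly p (g j0) \<noteq> 0"
    unfolding p_def poly_prod using inj \<open>j0 < m\<close> by (auto simp: inj_on_def)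
  ultimately show False by contradiction
qed

text \<open>Column \<open>c\<close> of the block matrix stands for column \<open>c mod m\<close> of block \<open>c div m\<close>;
  \<open>monomial_row m g (k, d)\<close> is the row of \<open>(b(g 0) \<dots> b(g (n - 1)))\<close> for the row vector
  \<open>b(y)\<close> with entry \<open>y ^ d\<close> in column \<open>k\<close> and \<open>0\<close> elsewhere.\<close>
definition monomial_row :: "nat \<Rightarrow> (nat \<Rightarrow> 'a::field) \<Rightarrow> nat \<times> nat \<Rightarrow> nat \<Rightarrow> 'a" where
  "monomial_row m g kd c = (if c mod m = fst kd then g (c div m) ^ snd kd else 0)"

lemma sum_lessThan_mult_nat:
  fixes f :: "nat \<Rightarrow> 'a::comm_monoid_add"
  shows "(\<Sum>c<m * n. f c) = (\<Sum>j<n. \<Sum>k<m. f (m * j + k))"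
proof -
  have "(\<Sum>c<m * n. f c) = (\<Sum>j<n. \<Sum>c\<in>{j * m..<j * m + m}. f c)"
    by (simp add: sum.nat_group mult.commute)
  also have "\<dots> = (\<Sum>j<n. \<Sum>k<m. f (m * j + k))"
    by (rule sum.cong[OF refl]) (simp add: sum.atLeastLessThan_shift_0 atLeast0LessThan mult.commute)
  finally show ?thesis .
qed

lemma monomial_rows_separate:
  fixes g u :: "nat \<Rightarrow> 'a::field"
  assumes inj: "inj_on g {..<n}" and "c0 < m * n" "u c0 \<noteq> 0"
  shows "\<exists>kd. fst kd < m \<and> snd kd < n \<and> (\<Sum>c<m * n. monomial_row m g kd c * u c) \<noteq> 0"
proof -
  define k where "k = c0 mod m"
  have "m > 0" using \<open>c0 < m * n\<close> by (cases m) auto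
  then have "k < m" by (simp add: k_def)
  have "c0 div m < n" using \<open>c0 < m * n\<close> by (simp add: less_mult_imp_div_less mult.commute)
  moreover have "m * (c0 div m) + k = c0" by (simp add: k_def)
  ultimately obtain d where "d < n" and d: "(\<Sum>j<n. g j ^ d * u (m * j + k)) \<noteq> 0"
    using vandermonde_separates[OF inj, of "c0 div m" "\<lambda>j. u (m * j + k)"] \<open>u c0 \<noteq> 0\<close> by auto
  have "(\<Sum>c<m * n. monomial_row m g (k, d) c * u c)
      = (\<Sum>j<n. \<Sum>k'<m. if k' = k then g j ^ d * u (m * j + k) else 0)"
    unfolding sum_lessThan_mult_nat by (intro sum.cong) (auto simp: monomial_row_def)
  also have "\<dots> = (\<Sum>j<n. g j ^ d * u (m * j + k))" using \<open>k < m\<close> by simp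
  finally show ?thesis using d \<open>k < m\<close> \<open>d < n\<close> by (intro exI[of _ "(k, d)"]) simp
qed

lemma lin_indep_stacked_rows:
  fixes a :: "nat \<Rightarrow> nat \<Rightarrow> 'a::field" and E :: "'e \<Rightarrow> nat \<Rightarrow> 'a"
  assumes "r + length S \<le> n"
    and kernel: "\<forall>u. (\<forall>i\<le>r. (\<Sum>c<n. a i c * u c) = 0) \<and> (\<forall>e\<in>set S. (\<Sum>c<n. E e c * u c) = 0)
                   \<longrightarrow> (\<forall>c<n. u c = 0)"
  shows "lin_indep_vecs (n + 1) {..<n} (\<lambda>c i. if i \<le> r then a i c
           else if i - (r + 1) < length S then E (S ! (i - (r + 1))) c else 0)"
  unfolding lin_indep_vecs_def
proof (intro allI impI)
  fix w assume rows: "\<forall>i<n + 1. (\<Sum>c\<in>{..<n}. w c * (if i \<le> r then a i c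
         else if i - (r + 1) < length S then E (S ! (i - (r + 1))) c else 0)) = 0"
  have "(\<Sum>c<n. a i c * w c) = 0" if "i \<le> r" for i
    using rows[rule_format, of i] that assms(1) by (simp add: mult.commute)
  moreover have "(\<Sum>c<n. E e c * w c) = 0" if "e \<in> set S" for e
  proof -
    obtain t where "t < length S" "e = S ! t" using \<open>e \<in> set S\<close> by (metis in_set_conv_nth)
    then show ?thesis
      using rows[rule_format, of "r + 1 + t"] assms(1) by (simp add: mult.commute)
  qed
  ultimately show "\<forall>c\<in>{..<n}. w c = 0" using kernel by blast
qed

lemma complete_by_monomial_rows:
  fixes a x :: "nat \<Rightarrow> nat \<Rightarrow> 'a::field" and g :: "nat \<Rightarrow> 'a"
  assumes inj: "inj_on g {..<n}"
    and images_indep: "lin_indep_vecs r {..<r} (\<lambda>k i. \<Sum>c<m * n. a i c * x k c)"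
  obtains S where "set S \<subseteq> {kd. fst kd < m \<and> snd kd < n}"
    and "lin_indep_vecs (m * n + 1) {..<m * n} (\<lambda>c i. if i \<le> r then a i c
           else if i - (r + 1) < length S then monomial_row m g (S ! (i - (r + 1))) c else 0)"
proof -
  define N where "N = m * n"
  define Z where "Z u \<longleftrightarrow> (\<forall>i\<le>r. (\<Sum>c<N. a i c * u c) = 0)" for u
  have bounded: "r + card I \<le> N"
    if "finite I" "\<forall>i\<in>I. Z (v i)" "lin_indep_vecs N I v" for I :: "nat set" and v
    using lin_indep_kernel_card_le[OF images_indep[folded N_def] that(1) _ that(3)] that(2)
    by (simp add: Z_def)
  from bounded[of "{}"] have "r \<le> N" by simp
  have kernel_bounded: "card I \<le> N - r"
    if "finite I" "\<forall>i\<in>I. Z (v i)" "lin_indep_vecs N I v" for I :: "nat set" and v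
    using bounded[OF that] by simp
  have separating: "\<exists>kd. (fst kd < m \<and> snd kd < n) \<and> (\<Sum>c<N. monomial_row m g kd c * u c) \<noteq> 0"
    if "\<exists>c<N. u c \<noteq> 0" for u
    using that monomial_rows_separate[OF inj] unfolding N_def by blast
  have "\<exists>S. length S \<le> N - r \<and> set S \<subseteq> {kd. fst kd < m \<and> snd kd < n} \<and>
      (\<forall>u. Z u \<and> (\<forall>e\<in>set S. (\<Sum>c<N. monomial_row m g e c * u c) = 0) \<longrightarrow> (\<forall>c<N. u c = 0))"
    by (rule select_separating_functionals) (fact separating, fact kernel_bounded)
  then obtain S where S: "length S \<le> N - r" "set S \<subseteq> {kd. fst kd < m \<and> snd kd < n}"
    "\<forall>u. Z u \<and> (\<forall>e\<in>set S. (\<Sum>c<N. monomial_row m g e c * u c) = 0) \<longrightarrow> (\<forall>c<N. u c = 0)"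
    by (elim exE conjE)
  from S(1) \<open>r \<le> N\<close> have "r + length S \<le> N" by simp
  then have "lin_indep_vecs (N + 1) {..<N} (\<lambda>c i. if i \<le> r then a i c
      else if i - (r + 1) < length S then monomial_row m g (S ! (i - (r + 1))) c else 0)"
    using S(3)[unfolded Z_def] by (rule lin_indep_stacked_rows)
  with S(2) show thesis unfolding N_def by (rule that)
qed

definition monomial_matrix :: "(nat \<times> nat) list \<Rightarrow> nat \<Rightarrow> nat \<Rightarrow> 'c::zero_neq_one poly" where
  "monomial_matrix S t k = (if t < length S \<and> fst (S ! t) = k then monom 1 (snd (S ! t)) else 0)"

lemma degree_monomial_matrix:
  assumes "\<forall>kd\<in>set S. snd kd < n"
  shows "degree (monomial_matrix S t k) \<le> n - 1"
  using assms nth_mem[of t S] by (fastforce simp: monomial_matrix_def degree_monom_eq)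

locale differential_field =
  fixes emb :: "'c::field \<Rightarrow> 'a::field" and D :: "'a \<Rightarrow> 'a"
  assumes emb_add: "emb (a + b) = emb a + emb b"
    and emb_one: "emb 1 = 1"
    and D_add: "D (x + y) = D x + D y"
    and D_mult: "D (x * y) = x * D y + D x * y"
    and constants: "{x. D x = 0} = range emb"
begin

lemma emb_0 [simp]: "emb 0 = 0"
  using emb_add[of 0 0] by (metis add_cancel_right_right)

lemma D_0 [simp]: "D 0 = 0"
  using D_add[of 0 0] by (metis add_cancel_right_right)

lemma D_1 [simp]: "D 1 = 0"
  using D_mult[of 1 1] by (metis add_cancel_right_right mult_1_left mult_1_right)

lemma D_sum: "D (\<Sum>k\<in>A. f k) = (\<Sum>k\<in>A. D (f k))"
  by (induction A rule: infinite_finite_induct) (simp_all add: D_add)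

lemma derivative_of_monic_relation:
  assumes rel: "\<And>i. i < Suc n \<Longrightarrow> (\<Sum>k<Suc n. a k * (D ^^ i) (b k)) = 0"
    and monic: "a n = 1" and "i < n"
  shows "(\<Sum>k<n. D (a k) * (D ^^ i) (b k)) = 0"
proof -
  have "0 = D (\<Sum>k<Suc n. a k * (D ^^ i) (b k))"
    using rel[of i] \<open>i < n\<close> by simp
  also have "\<dots> = (\<Sum>k<Suc n. a k * (D ^^ Suc i) (b k)) + (\<Sum>k<Suc n. D (a k) * (D ^^ i) (b k))"
    by (simp add: D_sum D_mult sum.distrib del: sum.lessThan_Suc)
  also have "(\<Sum>k<Suc n. a k * (D ^^ Suc i) (b k)) = 0"
    using rel[of "Suc i"] \<open>i < n\<close> by simp
  finally show ?thesis using monic by simp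
qed

lemma c_lin_indep_SucD:
  assumes "c_lin_indep emb b (Suc n)"
  shows "c_lin_indep emb b n"
  unfolding c_lin_indep_def
proof (intro allI impI)
  fix c i assume "(\<Sum>i<n. emb (c i) * b i) = 0" and "i < n"
  then have "(\<Sum>i<Suc n. emb ((c(n := 0)) i) * b i) = 0" by simp
  from assms[unfolded c_lin_indep_def, rule_format, OF this, of i] \<open>i < n\<close>
  show "c i = 0" by simp
qed

theorem wronskian_lin_indep:
  assumes "c_lin_indep emb b n"
  shows "lin_indep_vecs n {..<n} (\<lambda>k i. (D ^^ i) (b k))"
  using assms
proof (induction n)
  case 0
  show ?case by (simp add: lin_indep_vecs_def)
next
  case (Suc n)
  have IH: "\<And>\<alpha>. (\<forall>i<n. (\<Sum>k<n. \<alpha> k * (D ^^ i) (b k)) = 0) \<Longrightarrow> \<forall>k<n. \<alpha> k = 0"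
    using Suc.IH[OF c_lin_indep_SucD[OF Suc.prems]] unfolding lin_indep_vecs_def by simp
  show ?case unfolding lin_indep_vecs_def
  proof (intro allI impI)
    fix \<alpha> assume rel: "\<forall>i<Suc n. (\<Sum>k\<in>{..<Suc n}. \<alpha> k * (D ^^ i) (b k)) = 0"
    have "\<alpha> n = 0"
      \<comment> \<open>Otherwise, after normalising \<open>\<alpha> n = 1\<close>, differentiating the relations gives shorter
        ones with coefficients \<open>D (\<alpha> k)\<close>; so all \<open>\<alpha> k\<close> are constants, contradicting
        \<open>C\<close>-linear independence.\<close>
    proof (rule ccontr)
      assume "\<alpha> n \<noteq> 0"
      define \<beta> where "\<beta> k = \<alpha> k / \<alpha> n" for k
      have rel_\<beta>: "(\<Sum>k<Suc n. \<beta> k * (D ^^ i) (b k)) = 0" if "i < Suc n" for i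
        using rel that by (simp add: \<beta>_def sum_divide_distrib[symmetric] del: sum.lessThan_Suc)
      have "\<beta> n = 1" using \<open>\<alpha> n \<noteq> 0\<close> by (simp add: \<beta>_def)
      then have "\<forall>i<n. (\<Sum>k<n. D (\<beta> k) * (D ^^ i) (b k)) = 0"
        using derivative_of_monic_relation[OF rel_\<beta>] by blast
      then have D_\<beta>: "\<forall>k<n. D (\<beta> k) = 0" by (rule IH)
      have "\<forall>k\<in>{..<Suc n}. \<exists>c. \<beta> k = emb c"
      proof
        fix k assume "k \<in> {..<Suc n}"
        then have "D (\<beta> k) = 0" using D_\<beta> \<open>\<beta> n = 1\<close> by (auto simp: less_Suc_eq)
        then show "\<exists>c. \<beta> k = emb c" using constants by auto
      qed
      then obtain c where c: "\<forall>k\<in>{..<Suc n}. \<beta> k = emb (c k)" by (metis bchoice)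
      have "(\<Sum>k<Suc n. emb (c k) * b k) = (\<Sum>k<Suc n. \<beta> k * (D ^^ 0) (b k))"
        using c by simp
      also have "\<dots> = 0" by (rule rel_\<beta>) simp
      finally have "c n = 0" using Suc.prems unfolding c_lin_indep_def by blast
      then show False using c \<open>\<beta> n = 1\<close> by simp
    qed
    then have "\<forall>k<n. \<alpha> k = 0" using rel IH by simp
    with \<open>\<alpha> n = 0\<close> show "\<forall>k\<in>{..<Suc n}. \<alpha> k = 0" by (auto simp: less_Suc_eq)
  qed
qed

lemma c_span_member:
  assumes "k < n"
  shows "v k \<in> c_span emb v n"
proof -
  have "(\<Sum>i<n. emb (if i = k then 1 else 0) * v i) = (\<Sum>i<n. if i = k then v i else 0)"
    by (rule sum.cong) (simp_all add: emb_one)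
  also have "\<dots> = v k" using assms by simp
  finally show ?thesis
    unfolding c_span_def by (intro CollectI exI[of _ "\<lambda>i. if i = k then 1 else 0"]) simp
qed

lemma eval_monomial_matrix:
  "eval_y emb (monomial_matrix S t (c mod m)) (g (c div m)) =
     (if t < length S then monomial_row m g (S ! t) c else 0)"
  by (simp add: monomial_matrix_def monomial_row_def eval_y_def map_poly_monom emb_one poly_monom)

end

theorem lemma6:
  fixes emb :: "'c::field_char_0 \<Rightarrow> 'a::field"
    and D :: "'a \<Rightarrow> 'a"
    and xx :: 'a
    and comp :: "'a \<Rightarrow> 'a \<Rightarrow> 'a"
    and l :: "nat \<Rightarrow> 'c poly" and rL :: nat
    and P :: "'c poly poly" and rP :: nat
    and f g :: "nat \<Rightarrow> 'a"
    and V :: "'a set" and r :: nat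
    and A :: "nat \<Rightarrow> nat \<Rightarrow> 'c poly poly"
  assumes emb_add: "\<And>a b. emb (a + b) = emb a + emb b"
    and emb_mult: "\<And>a b. emb (a * b) = emb a * emb b"
    and emb_one: "emb 1 = 1"
    and D_add: "\<And>a b. D (a + b) = D a + D b"
    and D_mult: "\<And>a b. D (a * b) = a * D b + D a * b"
    and constants: "{a. D a = 0} = range emb"
    and D_x: "D xx = 1"
    and chain_rule: "\<And>u v. D (comp u v) = comp (D u) v * D v"
    and L_order: "l rL \<noteq> 0"
    and P_deg: "degree P = rP"
    and P_sqfree: "squarefree (map_poly (\<lambda>q. Fract q 1) P)"
    and P_no_const_div: "\<And>q :: 'c alg_closure poly.
           map_poly (\<lambda>a. [:a:]) q dvd map_poly (map_poly to_ac) P \<Longrightarrow> degree q = 0"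
    and f_sol: "\<And>i. i < rL \<Longrightarrow> (\<Sum>k\<le>rL. eval_x emb xx (l k) * (D ^^ k) (f i)) = 0"
    and f_indep: "c_lin_indep emb f rL"
    and g_sol: "\<And>j. j < rP \<Longrightarrow> eval_xy emb xx P (g j) = 0"
    and g_distinct: "inj_on g {..<rP}"
    and V_def: "V = {(\<Sum>i<rL. \<Sum>j<rP. emb (c i j) * comp (f i) (g j)) | c :: nat \<Rightarrow> nat \<Rightarrow> 'c. True}"
    and r_dim: "\<exists>b. c_lin_indep emb b r \<and> c_span emb b r = V"
    and A_prop: "\<And>h. h \<in> V \<longleftrightarrow>
           vec (r + 1) (\<lambda>i. (D ^^ i) h) \<in>
             {mat (r + 1) (rL * rP) (\<lambda>(i, c). eval_xy emb xx (A i (c mod rL)) (g (c div rL))) *\<^sub>v w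
               | w. w \<in> carrier_vec (rL * rP)}"
  shows "\<exists>B :: nat \<Rightarrow> nat \<Rightarrow> 'c poly.
           (\<forall>i < rL * rP - r. \<forall>k < rL. degree (B i k) \<le> rP - 1) \<and>
           vec_space.rank (rL * rP + 1)
             (mat (rL * rP + 1) (rL * rP) (\<lambda>(i, c).
                if i \<le> r then eval_xy emb xx (A i (c mod rL)) (g (c div rL))
                else eval_y emb (B (i - (r + 1)) (c mod rL)) (g (c div rL)))) = rL * rP"
proof -
  interpret differential_field emb D
    using emb_add emb_one D_add D_mult constants by unfold_locales
  define a where "a i c = eval_xy emb xx (A i (c mod rL)) (g (c div rL))" for i c
  obtain b where b: "c_lin_indep emb b r" "c_span emb b r = V"
    using r_dim by blast
  have "\<exists>y. \<forall>i<r + 1. (D ^^ i) (b k) = (\<Sum>c<rL * rP. a i c * y c)" if "k < r" for k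
    using A_prop[of "b k"] b(2) c_span_member[where v = b, OF that] unfolding a_def
    by (intro column_space_coordinates) simp
  then obtain x where x: "\<And>k i. k < r \<Longrightarrow> i < r + 1 \<Longrightarrow> (D ^^ i) (b k) = (\<Sum>c<rL * rP. a i c * x k c)"
    by metis
  have "lin_indep_vecs r {..<r} (\<lambda>k i. (D ^^ i) (b k))"
    using b(1) by (rule wronskian_lin_indep)
  then have "lin_indep_vecs r {..<r} (\<lambda>k i. \<Sum>c<rL * rP. a i c * x k c)"
    by (rule lin_indep_vecs_cong[THEN iffD1, rotated]) (simp add: x)
  then obtain S where S: "set S \<subseteq> {kd. fst kd < rL \<and> snd kd < rP}"
    "lin_indep_vecs (rL * rP + 1) {..<rL * rP} (\<lambda>c i. if i \<le> r then a i c
       else if i - (r + 1) < length S then monomial_row rL g (S ! (i - (r + 1))) c else 0)"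
    by (rule complete_by_monomial_rows[OF g_distinct])
  show ?thesis
  proof (intro exI conjI)
    show "\<forall>i<rL * rP - r. \<forall>k<rL. degree (monomial_matrix S i k) \<le> rP - 1"
      using S(1) by (intro allI impI degree_monomial_matrix) auto
    show "vec_space.rank (rL * rP + 1) (mat (rL * rP + 1) (rL * rP) (\<lambda>(i, c).
        if i \<le> r then eval_xy emb xx (A i (c mod rL)) (g (c div rL))
        else eval_y emb (monomial_matrix S (i - (r + 1)) (c mod rL)) (g (c div rL)))) = rL * rP"
      by (rule rank_mat_eq_dim_col, rule lin_indep_vecs_cong[THEN iffD1, OF _ S(2)])
        (simp add: a_def eval_monomial_matrix)
  qed
qed

end
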